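(* Let $\Phi_1(t)=\sum_{k\ge0}\pi_k t^k$, where $\pi_k$ is the probability that a polynomial chosen uniformly at random among all $f\in\mathbb{F}_q[x]$ of degree at most $q-1$ with nonzero constant term has exactly $k$ zeroes in $\mathbb{F}_q$. Then \[ \Phi_1(t)=\left(1+\frac{t-1}{q}\right)^{q-1}. \]
   Context: $\mathbb{F}_q$ is the finite field with $q$ elements. *)

theory Defs
  imports "HOL-Computational_Algebra.Computational_Algebra" "HOL-Library.Cardinality"
begin

definition admissible_polys :: "('a::{finite,field}) poly set" where
  "admissible_polys = {f :: 'a poly. degree f \<le> CARD('a) - 1 \<and> coeff f 0 \<noteq> 0}"

definition num_zeros :: "('a::{finite,field}) poly \<Rightarrow> nat" where
  "num_zeros f = card {x. poly f x = 0}"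

definition zero_prob :: "('a::{finite,field}) itself \<Rightarrow> nat \<Rightarrow> real" where
  "zero_prob (TYPE('a)) k =
     real (card {f \<in> (admissible_polys :: 'a poly set). num_zeros f = k})
     / real (card (admissible_polys :: 'a poly set))"

end

theory Submission
  imports Defs
begin

text \<open>Evaluation is a bijection from the polynomials of degree below q over \<open>\<bbbF>\<^sub>q\<close> onto all
  functions \<open>\<bbbF>\<^sub>q \<Rightarrow> \<bbbF>\<^sub>q\<close> (Lagrange interpolation), so admissible polynomials correspond to
  functions g with \<open>g 0 \<noteq> 0\<close>, and their zeroes to the fibre of g over 0. Choosing the k zeroes among
  the q - 1 nonzero points and nonzero values elsewhere gives \<open>(q-1 choose k) (q-1)^(q-k)\<close> such
  functions out of \<open>(q-1) q^(q-1)\<close>: the number of zeroes is binomially distributed with q - 1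
  trials and success probability 1/q, whose generating function is \<open>(1 + (t-1)/q)^(q-1)\<close>.\<close>

lemma card_Compl: "card (- (A :: 'a::finite set)) = CARD('a) - card A"
  by (simp add: Compl_eq_Diff_UNIV card_Diff_subset)

definition lagrange_basis :: "'a::{finite,field} \<Rightarrow> 'a poly" where
  "lagrange_basis a = smult (inverse (\<Prod>b\<in>-{a}. a - b)) (\<Prod>b\<in>-{a}. [:-b, 1:])"

lemma poly_lagrange_basis: "poly (lagrange_basis a) x = (if x = a then 1 else 0)"
proof (cases "x = a")
  case True
  have "(\<Prod>b\<in>-{a}. a - b) \<noteq> 0" by simp
  with True show ?thesis by (simp add: lagrange_basis_def poly_prod)
next
  case False
  then have "(\<Prod>b\<in>-{a}. x - b) = 0" by simp
  with False show ?thesis by (simp add: lagrange_basis_def poly_prod)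
qed

lemma degree_lagrange_basis: "degree (lagrange_basis (a::'a::{finite,field})) < CARD('a)"
proof -
  have "degree (\<Prod>b\<in>-{a}. [:-b, 1::'a:]) \<le> (\<Sum>b\<in>-{a}. 1)"
    using degree_prod_sum_le[of "-{a}" "\<lambda>b. [:-b, 1::'a:]"] by simp
  also have "\<dots> < CARD('a)" by (simp add: card_Compl)
  finally show ?thesis
    unfolding lagrange_basis_def using degree_smult_le le_less_trans by blast
qed

lemma bij_betw_poly_degree_less_card:
  "bij_betw poly {p::'a::{finite,field} poly. degree p < CARD('a)} UNIV"
proof (rule bij_betwI')
  fix p q :: "'a poly"
  assume "p \<in> {p. degree p < CARD('a)}" "q \<in> {p. degree p < CARD('a)}"
  then show "(poly p = poly q) = (p = q)"
    using poly_eqI_degree[of UNIV p q] by auto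
next
  fix h :: "'a \<Rightarrow> 'a"
  define p where "p = (\<Sum>a\<in>UNIV. smult (h a) (lagrange_basis a))"
  have "h = poly p"
    by (simp add: p_def fun_eq_iff poly_sum poly_lagrange_basis if_distrib cong: if_cong)
  moreover have "degree p < CARD('a)"
    unfolding p_def using degree_lagrange_basis
    by (intro degree_sum_less) (auto intro: le_less_trans[OF degree_smult_le])
  ultimately show "\<exists>p\<in>{p. degree p < CARD('a)}. h = poly p" by blast
qed simp

lemma bij_betw_card_Collect:
  assumes "bij_betw f A B"
  shows "card {x \<in> A. P (f x)} = card {y \<in> B. P y}"
proof -
  have "bij_betw f {x \<in> A. P (f x)} {y \<in> B. P y}"
    using bij_betw_imp_surj_on[OF assms] by (intro bij_betw_subset[OF assms]) auto
  then show ?thesis by (rule bij_betw_same_card)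
qed

lemma card_functions_fiber_eq:
  "card {g :: 'a::finite \<Rightarrow> 'b::finite. {x. g x = b} = Z}
     = (CARD('b) - 1) ^ (CARD('a) - card Z)"
proof -
  have "{g. {x. g x = b} = Z} = (\<Pi>\<^sub>E x\<in>UNIV. if x \<in> Z then {b} else -{b})"
    by (auto simp: PiE_iff split: if_splits)
  then have "card {g. {x. g x = b} = Z} = (\<Prod>x\<in>UNIV. if x \<in> Z then 1 else CARD('b) - 1)"
    by (simp add: card_PiE if_distrib card_Compl cong: if_cong)
  also have "\<dots> = (CARD('b) - 1) ^ (CARD('a) - card Z)"
    by (simp add: prod.If_cases Compl_eq_Diff_UNIV card_Diff_subset)
  finally show ?thesis .
qed

lemma card_functions_fiber_card:
  "card {g :: 'a::finite \<Rightarrow> 'b::finite. g a \<noteq> b \<and> card {x. g x = b} = k}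
     = (CARD('a) - 1 choose k) * (CARD('b) - 1) ^ (CARD('a) - k)"
proof -
  define Zs where "Zs = {Z. Z \<subseteq> -{a} \<and> card Z = k}"
  have "card {g :: 'a \<Rightarrow> 'b. g a \<noteq> b \<and> card {x. g x = b} = k}
      = card (\<Union>Z\<in>Zs. {g :: 'a \<Rightarrow> 'b. {x. g x = b} = Z})"
    by (rule arg_cong[where f = card]) (auto simp: Zs_def)
  also have "\<dots> = (\<Sum>Z\<in>Zs. card {g :: 'a \<Rightarrow> 'b. {x. g x = b} = Z})"
    by (rule card_UN_disjoint) auto
  also have "\<dots> = card Zs * (CARD('b) - 1) ^ (CARD('a) - k)"
    by (simp add: Zs_def card_functions_fiber_eq)
  also have "card Zs = CARD('a) - 1 choose k"
    unfolding Zs_def by (subst n_subsets) (simp_all add: card_Compl)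
  finally show ?thesis .
qed

lemma card_functions_avoiding:
  "card {g :: 'a::finite \<Rightarrow> 'b::finite. g a \<noteq> b} = (CARD('b) - 1) * CARD('b) ^ (CARD('a) - 1)"
proof -
  have "{g :: 'a \<Rightarrow> 'b. g a \<noteq> b} = (\<Pi>\<^sub>E x\<in>UNIV. if x = a then -{b} else UNIV)"
    by (auto simp: PiE_iff split: if_splits)
  then have "card {g :: 'a \<Rightarrow> 'b. g a \<noteq> b} = (\<Prod>x\<in>UNIV. if x = a then CARD('b) - 1 else CARD('b))"
    by (simp add: card_PiE if_distrib card_Compl cong: if_cong)
  also have "\<dots> = (CARD('b) - 1) * CARD('b) ^ (CARD('a) - 1)"
    by (simp add: prod.If_cases Compl_eq_Diff_UNIV card_Diff_subset)
  finally show ?thesis .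
qed

lemma binomial_pgf_nth:
  fixes p :: "'a::comm_ring_1"
  shows "((1 + fps_const p * (fps_X - 1)) ^ n) $ k = of_nat (n choose k) * p ^ k * (1 - p) ^ (n - k)"
proof -
  have affine: "1 + fps_const p * (fps_X - 1) = fps_const p * fps_X + fps_const (1 - p)"
    by (simp add: algebra_simps flip: fps_const_sub)
  have "((1 + fps_const p * (fps_X - 1)) ^ n) $ k
     = (\<Sum>j\<le>n. (fps_const (of_nat (n choose j) * p ^ j * (1 - p) ^ (n - j)) * fps_X ^ j) $ k)"
    unfolding affine binomial_ring fps_sum_nth
    by (simp add: fps_of_nat algebra_simps flip: fps_const_mult)
  also have "\<dots> = (\<Sum>j\<le>n. if j = k then of_nat (n choose j) * p ^ j * (1 - p) ^ (n - j) else 0)"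
    by (intro sum.cong) (auto simp: fps_X_power_iff)
  also have "\<dots> = of_nat (n choose k) * p ^ k * (1 - p) ^ (n - k)"
    by (simp add: binomial_eq_0)
  finally show ?thesis .
qed

lemma binomial_prob_ratio:
  assumes "2 \<le> q"
  shows "real ((q - 1 choose k) * (q - 1) ^ (q - k)) / real ((q - 1) * q ^ (q - 1))
       = real (q - 1 choose k) * (1 / real q) ^ k * (1 - 1 / real q) ^ (q - 1 - k)"
proof (cases "k \<le> q - 1")
  case True
  define m where "m = q - 1 - k"
  have "q - 1 = k + m"
    using True by (simp add: m_def)
  then have "real q ^ (q - 1) = real q ^ k * real q ^ m"
    by (simp add: power_add)
  moreover have "real (q - 1) ^ (q - k) = real (q - 1) * real (q - 1) ^ m"
    using True assms by (simp add: m_def Suc_diff_Suc flip: power_Suc)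
  moreover have "1 - 1 / real q = real (q - 1) / real q" "real (q - 1) > 0"
    using assms by (simp_all add: field_simps)
  ultimately show ?thesis
    by (simp add: m_def field_simps del: of_nat_diff)
qed (simp add: binomial_eq_0)

theorem lemma4p2:
  fixes q :: nat
  assumes "q = CARD('a::{finite,field})"
  shows "Abs_fps (zero_prob TYPE('a)) =
         (1 + fps_const (1 / real q) * (fps_X - 1)) ^ (q - 1)"
proof (rule fps_ext)
  fix k
  have "card {0 :: 'a, 1} \<le> q"
    unfolding assms by (rule card_mono) simp_all
  then have "2 \<le> q" by simp
  have admissible: "admissible_polys = {p :: 'a poly. degree p < CARD('a) \<and> poly p 0 \<noteq> 0}"
    using \<open>2 \<le> q\<close> assms by (auto simp: admissible_polys_def poly_0_coeff_0)
  have "card {p \<in> admissible_polys :: 'a poly set. num_zeros p = k}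
      = card {g :: 'a \<Rightarrow> 'a. g 0 \<noteq> 0 \<and> card {x. g x = 0} = k}"
    using bij_betw_card_Collect[OF bij_betw_poly_degree_less_card, of "\<lambda>g. g 0 \<noteq> 0 \<and> card {x. g x = 0} = k"]
    by (simp add: admissible num_zeros_def)
  moreover have "card (admissible_polys :: 'a poly set) = card {g :: 'a \<Rightarrow> 'a. g 0 \<noteq> 0}"
    using bij_betw_card_Collect[OF bij_betw_poly_degree_less_card, of "\<lambda>g. g 0 \<noteq> 0"]
    by (simp add: admissible)
  ultimately have "zero_prob TYPE('a) k
      = real ((q - 1 choose k) * (q - 1) ^ (q - k)) / real ((q - 1) * q ^ (q - 1))"
    by (simp add: zero_prob_def card_functions_fiber_card card_functions_avoiding assms)
  also have "\<dots> = real (q - 1 choose k) * (1 / real q) ^ k * (1 - 1 / real q) ^ (q - 1 - k)"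
    using \<open>2 \<le> q\<close> by (rule binomial_prob_ratio)
  also have "\<dots> = ((1 + fps_const (1 / real q) * (fps_X - 1)) ^ (q - 1)) $ k"
    by (rule binomial_pgf_nth[symmetric])
  finally show "Abs_fps (zero_prob TYPE('a)) $ k = ((1 + fps_const (1 / real q) * (fps_X - 1)) ^ (q - 1)) $ k"
    by simp
qed

end
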